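(* In the single-node deterministic selection process described in the context, let $c_8>0$ be arbitrary, and set $c_4=(b-1)\big((c_1/\Delta_{\min}(i))^{1/c_2}+1\big)$, $c_6=1-c_3/c_2$, $\xi(j)=\big((c_1/\Delta(j))^{1/c_2}+1\big)^{c_8}$ and $$c_7=(b-1)\Big(\max_{j\neq j^*}\xi(j)+(2(b-1))^{c_8}\Big)+(2c_4)^{c_8}.$$ Then for all $z>0$ and all $\tau\ge1$, $$\mathbb{P}\Big[\big|\mathbb{E}[V_\tau(i)]-V_\tau(i)\big|\ge\frac{z}{\tau^{c_6}}\Big]\le\frac{c_7}{z^{c_8}}.$$
   Context: Fix constants $c_1>0$ and $0<c_3<c_2$. A node $i$ has a finite set $C(i)$ of $b\ge2$ children; each child $j$ has a deterministic value $Q^*(j)\in[0,1]$, and there is a unique maximizer $j^*=\arg\max_{j\in C(i)}Q^*(j)$. Set $V^*(i)=Q^*(j^* )$, $\Delta(j)=Q^*(j^* )-Q^*(j)$ and $\Delta_{\min}(i)=\min_{j\neq j^*}\Delta(j)>0$. The node is visited at times $s=1,2,\dots$; at visit $s$ one child $\mu(s)$ is selected and yields value $Q^*(\mu(s))$. Let $T(i,s)=s-1$ be the number of previous visits to $i$ and $T(j,s)$ the number of previous selections of $j$ (before visit $s$). Selection rule: if some child has $T(j,s)=0$, select one such child (chosen at random); otherwise select a maximizer of $Q^*(j)+c_1\,T(i,s)^{c_3}/T(j,s)^{c_2}$, ties broken at random. After $\tau$ visits, $T_\tau(j)$ denotes the number of selections of $j$ among visits $1,\dots,\tau$, and $V_\tau(i)=\frac1\tau\sum_{s=1}^{\tau}Q^*(\mu(s))$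 is the average value of node $i$. *)

theory Defs
  imports "HOL-Probability.Probability"
begin

text \<open>Selection process at a single node i with children set C, child values Q.
  State = counts function T (number of previous selections of each child).
  At visit s (with s - 1 previous visits), the set of admissible children is
  computed; one of them is selected uniformly at random.\<close>

definition sel_index :: "real \<Rightarrow> real \<Rightarrow> real \<Rightarrow> ('c \<Rightarrow> real) \<Rightarrow> nat \<Rightarrow> ('c \<Rightarrow> nat) \<Rightarrow> 'c \<Rightarrow> real" where
  "sel_index c1 c2 c3 Q s T j = Q j + c1 * real (s - 1) powr c3 / real (T j) powr c2"

definition admissible :: "'c set \<Rightarrow> real \<Rightarrow> real \<Rightarrow> real \<Rightarrow> ('c \<Rightarrow> real) \<Rightarrow> nat \<Rightarrow> ('c \<Rightarrow> nat) \<Rightarrow> 'c set" where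
  "admissible C c1 c2 c3 Q s T =
     (if \<exists>j\<in>C. T j = 0 then {j\<in>C. T j = 0}
      else {j\<in>C. \<forall>k\<in>C. sel_index c1 c2 c3 Q s T k \<le> sel_index c1 c2 c3 Q s T j})"

fun counts_after :: "'c set \<Rightarrow> real \<Rightarrow> real \<Rightarrow> real \<Rightarrow> ('c \<Rightarrow> real) \<Rightarrow> nat \<Rightarrow> ('c \<Rightarrow> nat) pmf" where
  "counts_after C c1 c2 c3 Q 0 = return_pmf (\<lambda>_. 0)"
| "counts_after C c1 c2 c3 Q (Suc n) =
     bind_pmf (counts_after C c1 c2 c3 Q n)
       (\<lambda>T. map_pmf (\<lambda>j. T(j := T j + 1)) (pmf_of_set (admissible C c1 c2 c3 Q (Suc n) T)))"

text \<open>Average value V_tau(i) = (1/tau) sum_s Q(mu(s)) = (1/tau) sum_j T_tau(j) Q(j).\<close>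
definition avg_value :: "'c set \<Rightarrow> ('c \<Rightarrow> real) \<Rightarrow> nat \<Rightarrow> ('c \<Rightarrow> nat) \<Rightarrow> real" where
  "avg_value C Q \<tau> T = (\<Sum>j\<in>C. real (T j) * Q j) / real \<tau>"

end

theory Submission
  imports Defs
begin

text \<open>The concentration is deterministic. A suboptimal child j that has already been tried
  is selected at visit s only if its index beats that of j*, which forces the exploration bonus
  c1 (s-1)^c3 / T(j)^c2 to exceed Delta_min; hence on every sample path
  T_tau(j) <= (c1/Delta_min)^(1/c2) tau^(c3/c2) + 1. So V_tau, and with it its expectation, lies in
  an interval of length c4/tau^c6 below Q(j*). The deviation event is therefore empty for z > c4,
  while for z <= c4 the claimed bound is at least 1.\<close>

lemma admissible_subset: "admissible C c1 c2 c3 Q s T \<subseteq> C"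
  unfolding admissible_def by auto

lemma admissible_nonempty:
  assumes "finite C" "C \<noteq> {}"
  shows "admissible C c1 c2 c3 Q s T \<noteq> {}"
proof (cases "\<exists>j\<in>C. T j = 0")
  case True
  then show ?thesis unfolding admissible_def by auto
next
  case False
  let ?f = "sel_index c1 c2 c3 Q s T"
  have "Max (?f ` C) \<in> ?f ` C" using assms by (intro Max_in) auto
  then obtain j where "j \<in> C" "?f j = Max (?f ` C)" by auto
  with assms have "\<forall>k\<in>C. ?f k \<le> ?f j" by simp
  with \<open>j \<in> C\<close> False show ?thesis unfolding admissible_def by auto
qed

lemma set_pmf_counts_after_Suc:
  assumes "finite C" "C \<noteq> {}"
  shows "set_pmf (counts_after C c1 c2 c3 Q (Suc n)) =
    (\<Union>T\<in>set_pmf (counts_after C c1 c2 c3 Q n).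
       (\<lambda>j. T(j := T j + 1)) ` admissible C c1 c2 c3 Q (Suc n) T)"
proof -
  have "set_pmf (pmf_of_set (admissible C c1 c2 c3 Q (Suc n) T)) = admissible C c1 c2 c3 Q (Suc n) T"
    for T using admissible_nonempty[OF assms] finite_subset[OF admissible_subset assms(1)] by simp
  then show ?thesis by simp
qed

lemma sum_counts_after:
  assumes "finite C" "C \<noteq> {}" "T \<in> set_pmf (counts_after C c1 c2 c3 Q n)"
  shows "(\<Sum>j\<in>C. T j) = n"
  using assms(3)
proof (induction n arbitrary: T)
  case (Suc n)
  then obtain T0 i where T0: "T0 \<in> set_pmf (counts_after C c1 c2 c3 Q n)"
    and i: "i \<in> admissible C c1 c2 c3 Q (Suc n) T0" and T: "T = T0(i := T0 i + 1)"
    unfolding set_pmf_counts_after_Suc[OF assms(1,2)] by (elim UN_E imageE) (rule that)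
  have "i \<in> C" using admissible_subset i by (rule subsetD)
  have "(\<Sum>j\<in>C. T j) = T i + (\<Sum>j\<in>C - {i}. T j)"
    using assms(1) \<open>i \<in> C\<close> by (rule sum.remove)
  also have "(\<Sum>j\<in>C - {i}. T j) = (\<Sum>j\<in>C - {i}. T0 j)"
    by (rule sum.cong) (auto simp: T)
  also have "T i + (\<Sum>j\<in>C - {i}. T0 j) = Suc (T0 i + (\<Sum>j\<in>C - {i}. T0 j))"
    by (simp add: T)
  also have "T0 i + (\<Sum>j\<in>C - {i}. T0 j) = (\<Sum>j\<in>C. T0 j)"
    using assms(1) \<open>i \<in> C\<close> by (rule sum.remove[symmetric])
  finally show ?case using Suc.IH[OF T0] by simp
qed simp

lemma count_le_of_sel_index_le:
  assumes "c1 > 0" "c2 > 0" "d > 0" "T j > 0" "d \<le> Q jstar - Q j"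
    and "sel_index c1 c2 c3 Q s T jstar \<le> sel_index c1 c2 c3 Q s T j"
  shows "real (T j) \<le> (c1 / d) powr (1 / c2) * real (s - 1) powr (c3 / c2)"
proof -
  let ?n = "real (s - 1)"
  have "0 \<le> c1 * ?n powr c3 / real (T jstar) powr c2" using assms by simp
  with assms have "d \<le> c1 * ?n powr c3 / real (T j) powr c2"
    unfolding sel_index_def by linarith
  with assms have "real (T j) powr c2 \<le> c1 * ?n powr c3 / d"
    by (simp add: field_simps)
  then have "(real (T j) powr c2) powr (1 / c2) \<le> (c1 * ?n powr c3 / d) powr (1 / c2)"
    using assms by (intro powr_mono2) auto
  also have "(c1 * ?n powr c3 / d) powr (1 / c2) = (c1 / d) powr (1 / c2) * (?n powr c3) powr (1 / c2)"
    using assms powr_mult[of "c1 / d" "?n powr c3" "1 / c2"] by simp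
  also have "(?n powr c3) powr (1 / c2) = ?n powr (c3 / c2)" by (simp add: powr_powr)
  finally show ?thesis using assms by (simp add: powr_powr)
qed

lemma suboptimal_count_le:
  assumes "finite C" "C \<noteq> {}" "jstar \<in> C" "c1 > 0" "c2 > 0" "c3 \<ge> 0" "d > 0"
    and gap: "\<forall>j\<in>C. j \<noteq> jstar \<longrightarrow> d \<le> Q jstar - Q j"
    and "j \<in> C" "j \<noteq> jstar"
  shows "T \<in> set_pmf (counts_after C c1 c2 c3 Q n) \<Longrightarrow>
    real (T j) \<le> (c1 / d) powr (1 / c2) * real n powr (c3 / c2) + 1"
proof (induction n arbitrary: T)
  case (Suc n)
  let ?A = "(c1 / d) powr (1 / c2)"
  from Suc.prems obtain T0 i where T0: "T0 \<in> set_pmf (counts_after C c1 c2 c3 Q n)"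
    and i: "i \<in> admissible C c1 c2 c3 Q (Suc n) T0" and T: "T = T0(i := T0 i + 1)"
    unfolding set_pmf_counts_after_Suc[OF assms(1,2)] by (elim UN_E imageE) (rule that)
  have mono: "?A * real n powr (c3 / c2) \<le> ?A * real (Suc n) powr (c3 / c2)"
    using assms by (intro mult_left_mono powr_mono2) auto
  show ?case
  proof (cases "i = j")
    case False
    then show ?thesis using Suc.IH[OF T0] mono by (simp add: T)
  next
    case True
    consider "T0 j = 0" | "\<forall>k\<in>C. T0 k \<noteq> 0"
      "sel_index c1 c2 c3 Q (Suc n) T0 jstar \<le> sel_index c1 c2 c3 Q (Suc n) T0 j"
      using i True \<open>jstar \<in> C\<close> unfolding admissible_def by (auto split: if_splits)
    then show ?thesis
    proof cases
      case 2
      then have "real (T0 j) \<le> ?A * real n powr (c3 / c2)"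
        using count_le_of_sel_index_le[of c1 c2 d T0 j Q jstar c3 "Suc n"] assms by auto
      then show ?thesis using True mono by (simp add: T)
    qed (simp add: T True)
  qed
qed simp

lemma avg_value_bounds:
  assumes "finite C" "jstar \<in> C" and Q: "\<forall>j\<in>C. Q j \<le> Q jstar \<and> Q jstar - Q j \<le> 1"
    and "(\<Sum>j\<in>C. T j) = \<tau>" "\<tau> > 0" and B: "\<forall>j\<in>C - {jstar}. real (T j) \<le> B"
  shows "Q jstar - real (card (C - {jstar})) * B / real \<tau> \<le> avg_value C Q \<tau> T"
    and "avg_value C Q \<tau> T \<le> Q jstar"
proof -
  define loss where "loss = (\<Sum>j\<in>C - {jstar}. real (T j) * (Q jstar - Q j))"
  have "(\<Sum>j\<in>C. real (T j) * Q j) = (\<Sum>j\<in>C. real (T j) * Q jstar - real (T j) * (Q jstar - Q j))"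
    by (simp add: algebra_simps)
  also have "\<dots> = real \<tau> * Q jstar - loss"
    using assms(1,2,4) unfolding loss_def
    by (simp add: sum_subtractf sum.remove flip: sum_distrib_right of_nat_sum)
  finally have avg: "avg_value C Q \<tau> T = Q jstar - loss / real \<tau>"
    using \<open>\<tau> > 0\<close> unfolding avg_value_def by (simp add: field_simps)
  have "loss \<le> (\<Sum>j\<in>C - {jstar}. B)"
    unfolding loss_def using Q B
    by (intro sum_mono) (force intro: order_trans[OF mult_left_le])
  then have "loss \<le> real (card (C - {jstar})) * B" by simp
  then show "Q jstar - real (card (C - {jstar})) * B / real \<tau> \<le> avg_value C Q \<tau> T"
    using \<open>\<tau> > 0\<close> by (simp add: avg divide_right_mono)
  have "loss \<ge> 0" unfolding loss_def using Q by (intro sum_nonneg) auto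
  then show "avg_value C Q \<tau> T \<le> Q jstar"
    using \<open>\<tau> > 0\<close> by (simp add: avg)
qed

lemma exploration_term_le:
  fixes A p t :: real
  assumes "A \<ge> 0" "p \<ge> 0" "t \<ge> 1"
  shows "(A * t powr p + 1) / t \<le> (A + 1) / t powr (1 - p)"
proof -
  have "1 \<le> t powr p" using assms by (intro ge_one_powr_ge_zero) auto
  then have "(A * t powr p + 1) / t \<le> (A + 1) * t powr p / t"
    using assms by (intro divide_right_mono) (auto simp: algebra_simps)
  also have "\<dots> = (A + 1) / t powr (1 - p)"
    using assms by (simp add: powr_diff)
  finally show ?thesis .
qed

lemma avg_value_counts_after_bounds:
  assumes "finite C" "jstar \<in> C" "\<forall>j\<in>C. 0 \<le> Q j \<and> Q j \<le> 1"
    and gap: "\<forall>j\<in>C. j \<noteq> jstar \<longrightarrow> d \<le> Q jstar - Q j"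
    and "c1 > 0" "c2 > 0" "c3 \<ge> 0" "d > 0" "\<tau> \<ge> 1"
    and T: "T \<in> set_pmf (counts_after C c1 c2 c3 Q \<tau>)"
  defines "m \<equiv> real (card (C - {jstar})) * ((c1 / d) powr (1 / c2) + 1)"
  shows "Q jstar - m / real \<tau> powr (1 - c3 / c2) \<le> avg_value C Q \<tau> T \<and> avg_value C Q \<tau> T \<le> Q jstar"
proof -
  let ?A = "(c1 / d) powr (1 / c2)" and ?B = "(c1 / d) powr (1 / c2) * real \<tau> powr (c3 / c2) + 1"
  have "C \<noteq> {}" using assms by auto
  have Q: "\<forall>j\<in>C. Q j \<le> Q jstar \<and> Q jstar - Q j \<le> 1"
  proof
    fix j assume "j \<in> C"
    then have "Q j \<le> Q jstar" using gap \<open>d > 0\<close> by (cases "j = jstar") force+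
    moreover have "0 \<le> Q j" "Q jstar \<le> 1" using assms(2,3) \<open>j \<in> C\<close> by auto
    ultimately show "Q j \<le> Q jstar \<and> Q jstar - Q j \<le> 1" by linarith
  qed
  have B: "\<forall>j\<in>C - {jstar}. real (T j) \<le> ?B"
    using suboptimal_count_le[OF assms(1) \<open>C \<noteq> {}\<close> assms(2,5,6,7,8) gap _ _ T] by blast
  have "?B / real \<tau> \<le> (?A + 1) / real \<tau> powr (1 - c3 / c2)"
    using assms by (intro exploration_term_le) auto
  then have "real (card (C - {jstar})) * ?B / real \<tau> \<le> m / real \<tau> powr (1 - c3 / c2)"
    unfolding m_def times_divide_eq_right[symmetric] by (rule mult_left_mono) simp
  then show ?thesis
    using avg_value_bounds[OF assms(1,2) Q sum_counts_after[OF assms(1) \<open>C \<noteq> {}\<close> T] _ B] assms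
    by auto
qed

lemma measure_pmf_expectation_deviation_le:
  fixes P :: "'a pmf" and f :: "'a \<Rightarrow> real"
  assumes bounds: "\<forall>x\<in>set_pmf P. L \<le> f x \<and> f x \<le> U" and "x \<in> set_pmf P"
  shows "\<bar>measure_pmf.expectation P f - f x\<bar> \<le> U - L"
proof -
  have "integrable (measure_pmf P) f"
    using bounds
    by (intro measure_pmf.integrable_const_bound[where B = "\<bar>L\<bar> + \<bar>U\<bar>"])
       (auto simp: AE_measure_pmf_iff)
  then have "L \<le> measure_pmf.expectation P f" "measure_pmf.expectation P f \<le> U"
    using bounds
    by (auto intro!: measure_pmf.integral_ge_const measure_pmf.integral_le_const
             simp: AE_measure_pmf_iff)
  with bounds \<open>x \<in> set_pmf P\<close> show ?thesis by force
qed

lemma measure_pmf_deviation_tail: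
  fixes P :: "'a pmf" and f :: "'a \<Rightarrow> real"
  assumes bounds: "\<forall>x\<in>set_pmf P. L - m / t \<le> f x \<and> f x \<le> L"
    and "t > 0" "z > 0" "k > 0" "m powr k \<le> c"
  shows "measure_pmf.prob P {x. z / t \<le> \<bar>measure_pmf.expectation P f - f x\<bar>} \<le> c / z powr k"
proof (cases "m < z")
  case True
  have "m / t < z / t" using True \<open>t > 0\<close> by (simp add: divide_strict_right_mono)
  then have "set_pmf P \<inter> {x. z / t \<le> \<bar>measure_pmf.expectation P f - f x\<bar>} = {}"
    using measure_pmf_expectation_deviation_le[OF bounds] by force
  then have "measure_pmf.prob P {x. z / t \<le> \<bar>measure_pmf.expectation P f - f x\<bar>} = 0"
    by (simp add: measure_pmf_zero_iff)
  moreover have "0 \<le> c" using \<open>m powr k \<le> c\<close> powr_ge_zero order_trans by blast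
  ultimately show ?thesis by simp
next
  case False
  then have "z powr k \<le> c"
    using assms powr_mono2[of k z m] by (simp add: order_trans)
  then have "1 \<le> c / z powr k" using \<open>z > 0\<close> by simp
  then show ?thesis using measure_pmf.prob_le_1 order_trans by blast
qed

theorem lemma8:
  fixes C :: "'c set" and Q :: "'c \<Rightarrow> real" and jstar :: 'c
    and c1 c2 c3 c8 :: real and b :: nat
  assumes "finite C" and "card C = b" and "b \<ge> 2"
    and "\<forall>j\<in>C. 0 \<le> Q j \<and> Q j \<le> 1"
    and "jstar \<in> C" and "\<forall>j\<in>C. j \<noteq> jstar \<longrightarrow> Q j < Q jstar"
    and "c1 > 0" and "0 < c3" and "c3 < c2" and "c8 > 0"
  defines "\<Delta> \<equiv> (\<lambda>j. Q jstar - Q j)"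
  defines "\<Delta>min \<equiv> Min (\<Delta> ` (C - {jstar}))"
  defines "c4 \<equiv> real (b - 1) * ((c1 / \<Delta>min) powr (1 / c2) + 1)"
  defines "c6 \<equiv> 1 - c3 / c2"
  defines "\<xi> \<equiv> (\<lambda>j. ((c1 / \<Delta> j) powr (1 / c2) + 1) powr c8)"
  defines "c7 \<equiv> real (b - 1) * (Max (\<xi> ` (C - {jstar})) + (2 * real (b - 1)) powr c8)
                + (2 * c4) powr c8"
  shows "\<forall>z::real. \<forall>\<tau>::nat. z > 0 \<longrightarrow> \<tau> \<ge> 1 \<longrightarrow>
    measure_pmf.prob (counts_after C c1 c2 c3 Q \<tau>)
      {T. \<bar>measure_pmf.expectation (counts_after C c1 c2 c3 Q \<tau>) (avg_value C Q \<tau>)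
           - avg_value C Q \<tau> T\<bar> \<ge> z / real \<tau> powr c6}
    \<le> c7 / z powr c8"
proof (intro allI impI)
  fix z :: real and \<tau> :: nat
  assume "z > 0" "\<tau> \<ge> 1"
  have card: "card (C - {jstar}) = b - 1" using assms by (simp add: card_Diff_singleton)
  have ne: "C - {jstar} \<noteq> {}"
  proof
    assume "C - {jstar} = {}"
    with card assms(3) show False by simp
  qed
  have fin: "finite (C - {jstar})" using assms(1) by simp
  have "\<Delta>min > 0" unfolding \<Delta>min_def \<Delta>_def using ne fin assms(6) by simp
  moreover have "\<forall>j\<in>C. j \<noteq> jstar \<longrightarrow> \<Delta>min \<le> Q jstar - Q j"
    unfolding \<Delta>min_def \<Delta>_def using fin by simp
  ultimately have bounds: "\<forall>T\<in>set_pmf (counts_after C c1 c2 c3 Q \<tau>).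
      Q jstar - c4 / real \<tau> powr c6 \<le> avg_value C Q \<tau> T \<and> avg_value C Q \<tau> T \<le> Q jstar"
    using avg_value_counts_after_bounds[of C jstar Q \<Delta>min c1 c2 c3 \<tau>] assms \<open>\<tau> \<ge> 1\<close>
    unfolding c4_def c6_def card by auto
  have "0 \<le> Max (\<xi> ` (C - {jstar}))"
    using ne fin unfolding \<xi>_def by (auto simp: Max_ge_iff)
  then have "(2 * c4) powr c8 \<le> c7" unfolding c7_def by simp
  moreover have "c4 powr c8 \<le> (2 * c4) powr c8"
    unfolding c4_def by (intro powr_mono2) (use assms in auto)
  ultimately show "measure_pmf.prob (counts_after C c1 c2 c3 Q \<tau>)
      {T. \<bar>measure_pmf.expectation (counts_after C c1 c2 c3 Q \<tau>) (avg_value C Q \<tau>)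
           - avg_value C Q \<tau> T\<bar> \<ge> z / real \<tau> powr c6} \<le> c7 / z powr c8"
    using measure_pmf_deviation_tail[OF bounds] \<open>z > 0\<close> \<open>\<tau> \<ge> 1\<close> assms(10) by simp
qed

end
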